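(* Let $\mathcal{M}=(\mathbf{x},\mathbf{p})$ be an auction format, let $\boldsymbol{\pi}^{(1)},\dots,\boldsymbol{\pi}^{(n)}\in\Delta([K+1])$ be quantile strategies, let $s_i:=s_{i,\boldsymbol{\pi}^{(i)}}$, and let $\tilde{\mathcal{M}}=(\tilde{\mathbf{x}},\tilde{\mathbf{p}})$ be the auxiliary auction defined by $\tilde{\mathbf{x}}(\mathbf{v}):=\mathbf{x}(s_1(v_1),\dots,s_n(v_n))$ and $\tilde p_i(\mathbf{v}):=\tilde x_i(v_i,\mathbf{v}_{-i})v_i-\int_0^{v_i}\tilde x_i(z,\mathbf{v}_{-i})dz$. Then, writing $\Pi^{(i)}_j:=\sum_{\ell\le j}\pi^{(i)}_\ell$ and $\mathbf{b}_{-i}:=(s_\ell(v_\ell))_{\ell\ne i}$, \[ \mathbb{E}_{\mathbf{v}\sim\mathcal{D}}\Big[\sum_{i\in[n]}\tilde p_i(\mathbf{v})\Big]=\sum_{i\in[n]}\mathbb{E}_{\mathbf{v}_{-i}}\Big[\sum_{j=1}^{K}\sum_{k=j+1}^{K+1}\pi^{(i)}_k\Big(x_i\big(\tfrac{j}{K},\mathbf{b}_{-i}\big)-x_i\big(\tfrac{j-1}{K},\mathbf{b}_{-i}\big)\Big)F_i^{-1}\big(\Pi^{(i)}_j\big)\Big]. \]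
   Context: Each bidder $i\in[n]$ has value $v_i$ drawn independently from a continuous distribution $\mathcal{D}_i$ on $[0,1]$ with CDF $F_i$ and quantile function $F_i^{-1}(y):=\inf\{v\in[0,1]:F_i(v)\ge y\}$; $\mathcal{D}:=\mathcal{D}_1\times\cdots\times\mathcal{D}_n$. Bid set $B:=\{j/K:j=0,\dots,K\}$. An auction format is $(\mathbf{x},\mathbf{p})$, $\mathbf{x}:B^n\to\Delta([n])$ (nonnegative entries summing to at most 1), $\mathbf{p}:B^n\to[0,1]^n$. For a quantile strategy $\boldsymbol{\pi}\in\Delta([K+1])$ (probability simplex), with $\Pi_0:=0$, $\Pi_j:=\sum_{\ell\le j}\pi_\ell$, the strategy $s_{i,\boldsymbol{\pi}}$ bids $0$ on $[0,F_i^{-1}(\Pi_1)]$ and $\frac{j-1}{K}$ on $(F_i^{-1}(\Pi_{j-1}),F_i^{-1}(\Pi_j)]$ for $j=2,\dots,K+1$. *)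

theory Defs
  imports "HOL-Probability.Probability"
begin

definition bidset :: "nat \<Rightarrow> real set" where
  "bidset K = {real j / real K | j. j \<le> K}"

text \<open>Auction format (x,p) for n bidders: on every bid profile in B^n (bids of
  bidders 0..n-1; profiles are extensional, i.e. undefined outside {..<n}),
  x b is a sub-probability vector over the bidders and p b has entries in [0,1].\<close>
definition auction_format ::
  "nat \<Rightarrow> nat \<Rightarrow> ((nat \<Rightarrow> real) \<Rightarrow> nat \<Rightarrow> real) \<Rightarrow> ((nat \<Rightarrow> real) \<Rightarrow> nat \<Rightarrow> real) \<Rightarrow> bool" where
  "auction_format n K x p \<longleftrightarrow>
     (\<forall>b \<in> PiE {..<n} (\<lambda>_. bidset K).
        (\<forall>i<n. 0 \<le> x b i) \<and> (\<Sum>i<n. x b i) \<le> 1 \<and> (\<forall>i<n. 0 \<le> p b i \<and> p b i \<le> 1))"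

definition prob_simplex :: "nat \<Rightarrow> (nat \<Rightarrow> real) \<Rightarrow> bool" where
  "prob_simplex K \<pi> \<longleftrightarrow> (\<forall>k\<in>{1..K+1}. 0 \<le> \<pi> k) \<and> (\<Sum>k=1..K+1. \<pi> k) = 1"

definition cumul :: "(nat \<Rightarrow> real) \<Rightarrow> nat \<Rightarrow> real" where
  "cumul \<pi> j = (\<Sum>l=1..j. \<pi> l)"

definition cdf_of :: "real measure \<Rightarrow> real \<Rightarrow> real" where
  "cdf_of D v = measure D {..v}"

definition quantile :: "(real \<Rightarrow> real) \<Rightarrow> real \<Rightarrow> real" where
  "quantile F y = Inf {v \<in> {0..1}. F v \<ge> y}"

text \<open>Quantile strategy s_{F,\<pi>}: bids 0 on [0, F^{-1}(\<Pi>_1)] and (j-1)/K on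
  (F^{-1}(\<Pi>_{j-1}), F^{-1}(\<Pi>_j)] for j = 2..K+1.\<close>
definition qstrat :: "(real \<Rightarrow> real) \<Rightarrow> nat \<Rightarrow> (nat \<Rightarrow> real) \<Rightarrow> real \<Rightarrow> real" where
  "qstrat F K \<pi> v =
     (\<Sum>j=2..K+1. if quantile F (cumul \<pi> (j-1)) < v \<and> v \<le> quantile F (cumul \<pi> j)
                    then (real j - 1) / real K else 0)"

definition bids :: "nat set \<Rightarrow> (nat \<Rightarrow> real \<Rightarrow> real) \<Rightarrow> (nat \<Rightarrow> real) \<Rightarrow> nat \<Rightarrow> real" where
  "bids I s v = restrict (\<lambda>l. s l (v l)) I"

definition xtil :: "nat \<Rightarrow> ((nat \<Rightarrow> real) \<Rightarrow> nat \<Rightarrow> real) \<Rightarrow> (nat \<Rightarrow> real \<Rightarrow> real) \<Rightarrow> (nat \<Rightarrow> real) \<Rightarrow> nat \<Rightarrow> real" where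
  "xtil n x s v = x (bids {..<n} s v)"

definition ptil :: "nat \<Rightarrow> ((nat \<Rightarrow> real) \<Rightarrow> nat \<Rightarrow> real) \<Rightarrow> (nat \<Rightarrow> real \<Rightarrow> real) \<Rightarrow> (nat \<Rightarrow> real) \<Rightarrow> nat \<Rightarrow> real" where
  "ptil n x s v i = xtil n x s v i * v i - (LBINT z=0..v i. xtil n x s (v(i := z)) i)"

end

(*
  Fix bidder i and the values of the others.  Under the quantile strategy, the allocation
  z |-> x_i(s_i(z), b_-i) of bidder i is a step function of the own value z: with the
  thresholds q_j = F_i^-1(Pi_j) it is x_i(0, b_-i) plus, for j = 1..K, the jump
  x_i(j/K, b_-i) - x_i((j-1)/K, b_-i) on (q_j, q_(K+1)].  The payment y g(y) - int_0^y g
  of the unit step g on (q_j, q_(K+1)] is q_j [y > q_j] - q_(K+1) [y > q_(K+1)].  Since F_i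
  is continuous, F_i(q_j) = Pi_j, so this payment has expectation q_j (1 - Pi_j), which is
  q_j times the sum of pi_k over k > j.  Integrating out v_i first (Fubini) and summing over
  the bidders gives the formula.
*)
theory Submission
  imports Defs
begin

section \<open>Step functions and their payments\<close>

lemma comp_sum_indicator_disjoint:
  fixes \<phi> :: "real \<Rightarrow> real" and a :: "'j \<Rightarrow> real"
  assumes "finite J" and "disjoint_family_on A J"
  shows "\<phi> (\<Sum>j\<in>J. a j * indicator (A j) z) = \<phi> 0 + (\<Sum>j\<in>J. (\<phi> (a j) - \<phi> 0) * indicator (A j) z)"
proof (cases "\<exists>j\<in>J. z \<in> A j")
  case True
  then obtain j where j: "j \<in> J" "z \<in> A j" by blast
  have single: "(\<Sum>j'\<in>J. f j' * indicator (A j') z) = f j" for f :: "'j \<Rightarrow> real"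
  proof -
    have "f j' * indicator (A j') z = (if j' = j then f j else 0)" if "j' \<in> J" for j'
      using assms(2) j that by (auto simp: disjoint_family_on_def indicator_def)
    then show ?thesis using assms(1) j(1) by (simp cong: sum.cong)
  qed
  show ?thesis unfolding single by simp
next
  case False
  then show ?thesis by (simp add: indicator_def)
qed

lemma disjoint_family_on_Ioc_mono:
  fixes t :: "nat \<Rightarrow> real"
  assumes "mono_on {..N} t"
  shows "disjoint_family_on (\<lambda>j. {t j<..t (Suc j)}) {..<N}"
unfolding disjoint_family_on_def
proof (intro ballI impI)
  fix i j assume ij: "i \<in> {..<N}" "j \<in> {..<N}" "i \<noteq> j"
  have "t (Suc (min i j)) \<le> t (max i j)"
    using ij by (intro mono_onD[OF assms]) auto
  moreover have "t i \<le> t (Suc i)" "t j \<le> t (Suc j)"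
    using ij by (auto intro!: mono_onD[OF assms])
  ultimately show "{t i<..t (Suc i)} \<inter> {t j<..t (Suc j)} = {}"
    using ij(3) by (cases "i < j") (auto simp: min_def max_def)
qed

lemma sum_partial_sums_indicator_Ioc:
  fixes t a :: "nat \<Rightarrow> real"
  assumes "mono_on {..N} t"
  shows "(\<Sum>j<N. (\<Sum>m<j. a m) * indicator {t j<..t (Suc j)} z)
       = (\<Sum>m<N. a m * indicator {t (Suc m)<..t N} z)"
  using assms
proof (induction N)
  case 0
  then show ?case by simp
next
  case (Suc N)
  have split: "indicator {t (Suc m)<..t (Suc N)} z
      = indicator {t (Suc m)<..t N} z + (indicator {t N<..t (Suc N)} z :: real)" if "m < N" for m
  proof -
    have "t (Suc m) \<le> t N" "t N \<le> t (Suc N)"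
      using that by (auto intro!: mono_onD[OF Suc.prems])
    then show ?thesis by (auto simp: indicator_def)
  qed
  have "mono_on {..N} t" using Suc.prems by (rule mono_on_subset) auto
  then have "(\<Sum>j<Suc N. (\<Sum>m<j. a m) * indicator {t j<..t (Suc j)} z)
      = (\<Sum>m<N. a m * indicator {t (Suc m)<..t N} z) + (\<Sum>m<N. a m) * indicator {t N<..t (Suc N)} z"
    by (simp only: sum.lessThan_Suc Suc.IH)
  also have "\<dots> = (\<Sum>m<N. a m * indicator {t (Suc m)<..t N} z + a m * indicator {t N<..t (Suc N)} z)"
    by (simp only: sum.distrib sum_distrib_right)
  also have "\<dots> = (\<Sum>m<N. a m * indicator {t (Suc m)<..t (Suc N)} z)"
    using split by (intro sum.cong refl) (simp add: distrib_left)
  also have "\<dots> = (\<Sum>m<Suc N. a m * indicator {t (Suc m)<..t (Suc N)} z)"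
    by simp
  finally show ?case .
qed

lemma interval_lebesgue_integrable_sum:
  fixes f :: "'j \<Rightarrow> real \<Rightarrow> real"
  assumes "finite J" and "\<And>j. j \<in> J \<Longrightarrow> interval_lebesgue_integrable lborel a b (f j)"
  shows "interval_lebesgue_integrable lborel a b (\<lambda>x. \<Sum>j\<in>J. f j x)"
  using assms
proof (induction J rule: finite_induct)
  case empty
  then show ?case by (simp add: interval_lebesgue_integrable_def set_integrable_def)
next
  case (insert j J)
  then show ?case by simp
qed

lemma interval_lebesgue_integral_sum:
  fixes f :: "'j \<Rightarrow> real \<Rightarrow> real"
  assumes "finite J" and "\<And>j. j \<in> J \<Longrightarrow> interval_lebesgue_integrable lborel a b (f j)"
  shows "(LBINT x=a..b. (\<Sum>j\<in>J. f j x)) = (\<Sum>j\<in>J. LBINT x=a..b. f j x)"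
  using assms by (induction J rule: finite_induct) (auto simp: interval_lebesgue_integrable_sum)

lemma interval_integrable_indicator_Ioc:
  "interval_lebesgue_integrable lborel a b (indicator {t<..T} :: real \<Rightarrow> real)"
proof -
  have "integrable lborel (indicator {t<..T} :: real \<Rightarrow> real)"
    by (cases "t \<le> T") (auto simp: integrable_indicator_iff)
  then have "integrable lborel (\<lambda>x. indicator A x *\<^sub>R indicator {t<..T} x :: real)"
    if "A \<in> sets borel" for A
    using that by (intro integrable_mult_indicator) auto
  then show ?thesis
    unfolding interval_lebesgue_integrable_def set_integrable_def by simp
qed

lemma interval_integral_indicator_Ioc:
  fixes t T y :: real
  assumes "0 \<le> t" and "t \<le> T"
  shows "(LBINT z=0..y. indicator {t<..T} z) = min y T - min y t"
proof (cases "0 \<le> y")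
  case True
  have "(LBINT z=0..y. indicator {t<..T} z) = (LBINT z:{0..y}. indicator {t<..T} z)"
    using True by (simp add: interval_integral_Icc zero_ereal_def)
  also have "\<dots> = measure lborel ({0..y} \<inter> {t<..T})"
    by (simp add: set_lebesgue_integral_def indicator_inter_arith[symmetric])
  also have "{0..y} \<inter> {t<..T} = {t<..min y T}"
    using assms by auto
  finally show ?thesis
    using assms by (cases "t \<le> y") (auto simp: min_def)
next
  case False
  have "(LBINT z=y..0. indicator {t<..T} z) = (LBINT z:{y..0}. indicator {t<..T} z)"
    using False by (simp add: interval_integral_Icc zero_ereal_def)
  then have "(LBINT z=0..y. indicator {t<..T} z) = - (LBINT z:{y..0}. indicator {t<..T} z)"
    by (subst interval_integral_endpoints_reverse) simp
  also have "\<dots> = - measure lborel ({y..0} \<inter> {t<..T})"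
    by (simp add: set_lebesgue_integral_def indicator_inter_arith[symmetric])
  also have "{y..0} \<inter> {t<..T} = {}"
    using assms by auto
  finally show ?thesis
    using assms False by simp
qed

lemma interval_integral_threshold_allocation:
  fixes a t :: "'j \<Rightarrow> real" and c T y :: real
  assumes "finite J" and "\<And>j. j \<in> J \<Longrightarrow> 0 \<le> t j \<and> t j \<le> T"
  shows "(LBINT z=0..y. c + (\<Sum>j\<in>J. a j * indicator {t j<..T} z))
       = c * y + (\<Sum>j\<in>J. a j * (min y T - min y (t j)))"
proof -
  have step_integrable: "interval_lebesgue_integrable lborel 0 y (\<lambda>z. a j * indicator {t j<..T} z)" for j
    by (intro interval_lebesgue_integrable_mult_right interval_integrable_indicator_Ioc)
  have const_integrable: "interval_lebesgue_integrable lborel 0 y (\<lambda>z. c)"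
    using interval_integral_const(1)[of 0 y c] by (simp add: zero_ereal_def)
  have "(LBINT z=0..y. c + (\<Sum>j\<in>J. a j * indicator {t j<..T} z))
      = (LBINT z=0..y. c) + (LBINT z=0..y. (\<Sum>j\<in>J. a j * indicator {t j<..T} z))"
    by (rule interval_lebesgue_integral_add(2)[OF const_integrable
          interval_lebesgue_integrable_sum[OF assms(1) step_integrable]])
  also have "\<dots> = (LBINT z=0..y. c) + (\<Sum>j\<in>J. LBINT z=0..y. a j * indicator {t j<..T} z)"
    by (simp only: interval_lebesgue_integral_sum[OF assms(1) step_integrable])
  also have "\<dots> = c * y + (\<Sum>j\<in>J. a j * (LBINT z=0..y. indicator {t j<..T} z))"
    by (simp add: zero_ereal_def)
  also have "\<dots> = c * y + (\<Sum>j\<in>J. a j * (min y T - min y (t j)))"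
    using assms(2) by (simp add: interval_integral_indicator_Ioc)
  finally show ?thesis .
qed

lemma threshold_allocation_payment:
  fixes a t :: "'j \<Rightarrow> real" and c T y :: real
  assumes "finite J" and "\<And>j. j \<in> J \<Longrightarrow> 0 \<le> t j \<and> t j \<le> T"
  shows "(c + (\<Sum>j\<in>J. a j * indicator {t j<..T} y)) * y
           - (LBINT z=0..y. c + (\<Sum>j\<in>J. a j * indicator {t j<..T} z))
         = (\<Sum>j\<in>J. a j * (t j * indicator {t j<..} y - T * indicator {T<..} y))"
proof -
  have integral: "(LBINT z=0..y. c + (\<Sum>j\<in>J. a j * indicator {t j<..T} z))
      = c * y + (\<Sum>j\<in>J. a j * (min y T - min y (t j)))"
    by (rule interval_integral_threshold_allocation[OF assms])
  have pointwise: "indicator {t j<..T} y * y - (min y T - min y (t j))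
      = t j * indicator {t j<..} y - T * indicator {T<..} y" if "j \<in> J" for j
    using assms(2)[OF that] by (auto simp: indicator_def min_def)
  have "(c + (\<Sum>j\<in>J. a j * indicator {t j<..T} y)) * y - (c * y + (\<Sum>j\<in>J. a j * (min y T - min y (t j))))
      = (\<Sum>j\<in>J. a j * (indicator {t j<..T} y * y - (min y T - min y (t j))))"
    by (simp add: algebra_simps sum_distrib_left sum.distrib sum_subtractf)
  also have "\<dots> = (\<Sum>j\<in>J. a j * (t j * indicator {t j<..} y - T * indicator {T<..} y))"
    using pointwise by (intro sum.cong) auto
  finally show ?thesis
    unfolding integral .
qed

lemma (in real_distribution) measure_greaterThan:
  "measure M {t<..} = 1 - cdf M t"
proof -
  have "measure M (space M - {..t}) = 1 - measure M {..t}"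
    by (intro prob_compl) auto
  moreover have "space M - {..t} = {t<..}"
    by auto
  ultimately show ?thesis
    by (simp add: cdf_def)
qed

lemma (in real_distribution) integral_scaled_tail_indicators:
  "(\<integral>y. t * indicator {t<..} y - T * indicator {T<..} y \<partial>M) = t * (1 - cdf M t) - T * (1 - cdf M T)"
  by (subst Bochner_Integration.integral_diff)
    (auto simp: measure_greaterThan integrable_indicator_iff less_top[symmetric])

section \<open>Quantiles of continuous distributions on the unit interval\<close>

lemma cdf_of_eq_cdf: "cdf_of = cdf"
  by (intro ext) (simp add: cdf_of_def cdf_def)

locale unit_interval_distribution = real_distribution M for M +
  assumes measure_unit_interval: "measure M {0..1} = 1"
    and continuous_cdf: "continuous_on UNIV (cdf M)"
begin

lemma cdf_at_0: "cdf M 0 = 0"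
proof -
  have "measure M (space M - {0..1}) = 1 - measure M {0..1}"
    by (intro prob_compl) auto
  then have outside: "measure M (UNIV - {0..1}) = 0"
    using measure_unit_interval by simp
  have "isCont (cdf M) 0"
    using continuous_cdf by (simp add: continuous_on_eq_continuous_at)
  then have atom: "measure M {0} = 0"
    by (simp add: isCont_cdf)
  have "cdf M 0 \<le> measure M ((UNIV - {0..1}) \<union> {0})"
    unfolding cdf_def by (intro finite_measure_mono) auto
  also have "\<dots> \<le> measure M (UNIV - {0..1}) + measure M {0}"
    by (intro measure_Un_le) auto
  finally show ?thesis
    using outside atom cdf_nonneg[of 0] by linarith
qed

lemma cdf_at_1: "cdf M 1 = 1"
proof -
  have "measure M {0..1} \<le> cdf M 1"
    unfolding cdf_def by (intro finite_measure_mono) auto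
  then show ?thesis
    using measure_unit_interval cdf_bounded_prob[of 1] by linarith
qed

lemma quantile_le: "v \<in> {0..1} \<Longrightarrow> y \<le> cdf M v \<Longrightarrow> quantile (cdf M) y \<le> v"
  unfolding quantile_def by (rule cInf_lower) (auto simp: bdd_below_def)

lemma quantile_mem:
  assumes "y \<le> 1"
  shows "quantile (cdf M) y \<in> {v \<in> {0..1}. y \<le> cdf M v}"
  unfolding quantile_def
proof (rule closed_contains_Inf)
  show "{v \<in> {0..1}. y \<le> cdf M v} \<noteq> {}"
    using assms cdf_at_1 by auto
  show "bdd_below {v \<in> {0..1}. y \<le> cdf M v}"
    by (auto simp: bdd_below_def)
  have "closed ({0..1} \<inter> {v. y \<le> cdf M v})"
    by (intro closed_Int closed_atLeastAtMost closed_Collect_le continuous_on_const continuous_cdf)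
  moreover have "{v \<in> {0..1}. y \<le> cdf M v} = {0..1} \<inter> {v. y \<le> cdf M v}"
    by auto
  ultimately show "closed {v \<in> {0..1}. y \<le> cdf M v}"
    by simp
qed

lemma quantile_nonneg: "y \<le> 1 \<Longrightarrow> 0 \<le> quantile (cdf M) y"
  using quantile_mem by auto

lemma quantile_mono: "y1 \<le> y2 \<Longrightarrow> y2 \<le> 1 \<Longrightarrow> quantile (cdf M) y1 \<le> quantile (cdf M) y2"
  using quantile_mem[of y2] by (intro quantile_le) auto

text \<open>Continuity of the cdf is what makes the quantile an exact right inverse.\<close>
lemma cdf_quantile:
  assumes "0 \<le> y" and "y \<le> 1"
  shows "cdf M (quantile (cdf M) y) = y"
proof -
  let ?q = "quantile (cdf M) y"
  have q: "0 \<le> ?q" "?q \<le> 1" "y \<le> cdf M ?q"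
    using quantile_mem[OF assms(2)] by auto
  obtain c where c: "0 \<le> c" "c \<le> ?q" "cdf M c = y"
    using IVT'[of "cdf M" 0 y ?q] q assms cdf_at_0 continuous_on_subset[OF continuous_cdf]
    by auto
  then have "?q \<le> c"
    using q by (intro quantile_le) auto
  with c show ?thesis
    by simp
qed

end

section \<open>Quantile strategies\<close>

lemma cumul_mono:
  assumes "prob_simplex K \<pi>" and "i \<le> j" and "j \<le> K + 1"
  shows "cumul \<pi> i \<le> cumul \<pi> j"
  using assms unfolding cumul_def prob_simplex_def by (intro sum_mono2) auto

lemma cumul_nonneg: "prob_simplex K \<pi> \<Longrightarrow> j \<le> K + 1 \<Longrightarrow> 0 \<le> cumul \<pi> j"
  using cumul_mono[of K \<pi> 0 j] by (simp add: cumul_def)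

lemma cumul_last: "prob_simplex K \<pi> \<Longrightarrow> cumul \<pi> (K + 1) = 1"
  by (simp add: prob_simplex_def cumul_def)

lemma cumul_le_1: "prob_simplex K \<pi> \<Longrightarrow> j \<le> K + 1 \<Longrightarrow> cumul \<pi> j \<le> 1"
  using cumul_mono[of K \<pi> j "K + 1"] cumul_last[of K \<pi>] by simp

lemma sum_upper_tail_eq_1_minus_cumul:
  assumes "prob_simplex K \<pi>" and "j \<le> K + 1"
  shows "(\<Sum>k=j+1..K+1. \<pi> k) = 1 - cumul \<pi> j"
proof -
  have "(\<Sum>k=1..K+1. \<pi> k) = cumul \<pi> j + (\<Sum>k=j+1..K+1. \<pi> k)"
    using sum.ub_add_nat[of 1 j \<pi> "K + 1 - j"] assms(2) by (simp add: cumul_def)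
  then show ?thesis
    using assms(1) by (simp add: prob_simplex_def)
qed

lemma of_nat_div_in_bidset: "j \<le> K \<Longrightarrow> real j / real K \<in> bidset K"
  unfolding bidset_def by blast

lemma of_nat_minus_one_div_in_bidset: "1 \<le> j \<Longrightarrow> j \<le> K \<Longrightarrow> (real j - 1) / real K \<in> bidset K"
  using of_nat_div_in_bidset[of "j - 1" K] by simp

locale quantile_strategy = unit_interval_distribution M for M +
  fixes K :: nat and \<pi> :: "nat \<Rightarrow> real"
  assumes prob_simplex: "prob_simplex K \<pi>"
begin

definition threshold :: "nat \<Rightarrow> real" where
  "threshold j = quantile (cdf M) (cumul \<pi> j)"

definition threshold_payment :: "nat \<Rightarrow> real \<Rightarrow> real" where
  "threshold_payment j y = threshold j * indicator {threshold j<..} y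
     - threshold (K + 1) * indicator {threshold (K + 1)<..} y"

lemma threshold_mono: "mono_on {..K + 1} threshold"
  unfolding threshold_def
  by (intro mono_onI quantile_mono cumul_mono[OF prob_simplex] cumul_le_1[OF prob_simplex]) auto

lemma threshold_nonneg: "j \<le> K + 1 \<Longrightarrow> 0 \<le> threshold j"
  unfolding threshold_def by (intro quantile_nonneg cumul_le_1[OF prob_simplex])

lemma cdf_threshold: "j \<le> K + 1 \<Longrightarrow> cdf M (threshold j) = cumul \<pi> j"
  unfolding threshold_def
  by (intro cdf_quantile cumul_nonneg[OF prob_simplex] cumul_le_1[OF prob_simplex])

lemma qstrat_eq_step_function:
  "qstrat (cdf M) K \<pi> z = (\<Sum>j<K+1. real j / real K * indicator {threshold j<..threshold (Suc j)} z)"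
proof -
  have "qstrat (cdf M) K \<pi> z
      = (\<Sum>j=2..K+1. if threshold (j - 1) < z \<and> z \<le> threshold j then (real j - 1) / real K else 0)"
    by (simp only: qstrat_def threshold_def)
  also have "\<dots> = (\<Sum>j=1..K. if threshold j < z \<and> z \<le> threshold (Suc j) then real j / real K else 0)"
    unfolding numeral_2_eq_2 Suc_eq_plus1[symmetric] sum.shift_bounds_cl_Suc_ivl by (intro sum.cong) auto
  also have "\<dots> = (\<Sum>j=1..K. real j / real K * indicator {threshold j<..threshold (Suc j)} z)"
    by (intro sum.cong) (auto simp: indicator_def)
  also have "\<dots> = (\<Sum>j<K+1. real j / real K * indicator {threshold j<..threshold (Suc j)} z)"
    unfolding Suc_eq_plus1[symmetric] sum.lessThan_Suc_shift
    by (simp add: sum.atLeast1_atMost_eq del: of_nat_Suc)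
  finally show ?thesis .
qed

text \<open>Above the last threshold, a null set, the quantile strategy bids 0 again; hence every
  step ends at \<open>threshold (K + 1)\<close>.\<close>
lemma comp_qstrat:
  fixes \<phi> :: "real \<Rightarrow> real"
  shows "\<phi> (qstrat (cdf M) K \<pi> z) = \<phi> 0 + (\<Sum>j=1..K.
     (\<phi> (real j / real K) - \<phi> ((real j - 1) / real K)) * indicator {threshold j<..threshold (K + 1)} z)"
proof -
  let ?d = "\<lambda>m. \<phi> (real (Suc m) / real K) - \<phi> (real m / real K)"
  have "\<phi> (qstrat (cdf M) K \<pi> z)
      = \<phi> 0 + (\<Sum>j<K+1. (\<phi> (real j / real K) - \<phi> 0) * indicator {threshold j<..threshold (Suc j)} z)"
    unfolding qstrat_eq_step_function
    by (intro comp_sum_indicator_disjoint disjoint_family_on_Ioc_mono threshold_mono) auto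
  also have "\<dots> = \<phi> 0 + (\<Sum>j<K+1. (\<Sum>m<j. ?d m) * indicator {threshold j<..threshold (Suc j)} z)"
    using sum_lessThan_telescope[of "\<lambda>m. \<phi> (real m / real K)"] by simp
  also have "\<dots> = \<phi> 0 + (\<Sum>m<K+1. ?d m * indicator {threshold (Suc m)<..threshold (K + 1)} z)"
    by (simp only: sum_partial_sums_indicator_Ioc[OF threshold_mono])
  also have "\<dots> = \<phi> 0 + (\<Sum>m<K. ?d m * indicator {threshold (Suc m)<..threshold (K + 1)} z)"
    by simp
  also have "\<dots> = \<phi> 0 + (\<Sum>j=1..K.
     (\<phi> (real j / real K) - \<phi> ((real j - 1) / real K)) * indicator {threshold j<..threshold (K + 1)} z)"
    by (simp add: sum.atLeast1_atMost_eq)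
  finally show ?thesis .
qed

lemma qstrat_in_bidset: "qstrat (cdf M) K \<pi> z \<in> bidset K"
proof -
  \<comment> \<open>\<open>comp_qstrat\<close> for the indicator function of the bid set: all jumps vanish.\<close>
  have "of_bool (qstrat (cdf M) K \<pi> z \<in> bidset K) = (of_bool (0 \<in> bidset K) :: real)"
    by (subst comp_qstrat)
      (auto intro!: sum.neutral simp: of_nat_div_in_bidset of_nat_minus_one_div_in_bidset)
  then show ?thesis
    using of_nat_div_in_bidset[of 0 K] by simp
qed

lemma qstrat_payment:
  fixes \<phi> :: "real \<Rightarrow> real"
  shows "\<phi> (qstrat (cdf M) K \<pi> y) * y - (LBINT z=0..y. \<phi> (qstrat (cdf M) K \<pi> z))
       = (\<Sum>j=1..K. (\<phi> (real j / real K) - \<phi> ((real j - 1) / real K)) * threshold_payment j y)"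
  unfolding comp_qstrat[of \<phi>] threshold_payment_def
  using threshold_nonneg threshold_mono
  by (intro threshold_allocation_payment) (auto intro: mono_onD)

lemma threshold_payment_measurable: "threshold_payment j \<in> borel_measurable M"
  unfolding threshold_payment_def by measurable

lemma threshold_payment_bounded: "\<bar>threshold_payment j y\<bar> \<le> \<bar>threshold j\<bar> + \<bar>threshold (K + 1)\<bar>"
  unfolding threshold_payment_def by (auto simp: indicator_def)

lemma integrable_threshold_payment: "integrable M (threshold_payment j)"
  unfolding threshold_payment_def
  by (intro Bochner_Integration.integrable_diff integrable_mult_right)
    (auto simp: integrable_indicator_iff less_top[symmetric])

lemma integral_threshold_payment:
  assumes "j \<le> K + 1"
  shows "(\<integral>y. threshold_payment j y \<partial>M) = threshold j * (\<Sum>k=j+1..K+1. \<pi> k)"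
proof -
  have "cdf M (threshold (K + 1)) = 1"
    using cdf_threshold cumul_last[OF prob_simplex] by simp
  then show ?thesis
    unfolding threshold_payment_def integral_scaled_tail_indicators
      sum_upper_tail_eq_1_minus_cumul[OF prob_simplex assms]
    using assms by (simp add: cdf_threshold)
qed

end

section \<open>Expected payments in the auxiliary auction\<close>

lemma integral_PiM_remove_coordinate:
  fixes f :: "('i \<Rightarrow> 'a) \<Rightarrow> real"
  assumes "finite I" and "i \<in> I" and "\<And>l. l \<in> I \<Longrightarrow> prob_space (M l)"
    and "integrable (PiM I M) f"
  shows "(\<integral>v. f v \<partial>PiM I M) = (\<integral>w. (\<integral>y. f (w(i := y)) \<partial>M i) \<partial>PiM (I - {i}) M)"
proof -
  \<comment> \<open>\<open>product_sigma_finite\<close> constrains every factor, so those outside \<open>I\<close> are replaced.\<close>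
  define M' where "M' l = (if l \<in> I then M l else M i)" for l
  interpret product_sigma_finite M'
    unfolding product_sigma_finite_def M'_def
    using assms(2,3) by (auto intro: prob_space_imp_sigma_finite)
  have PiM_M': "PiM J M = PiM J M'" if "J \<subseteq> I" for J
    using that by (intro PiM_cong) (auto simp: M'_def)
  have I: "insert i (I - {i}) = I"
    using assms(2) by auto
  have "(\<integral>v. f v \<partial>PiM I M) = (\<integral>v. f v \<partial>PiM (insert i (I - {i})) M')"
    using PiM_M'[of I] I by simp
  also have "\<dots> = (\<integral>w. (\<integral>y. f (w(i := y)) \<partial>M' i) \<partial>PiM (I - {i}) M')"
    using assms(1,4) PiM_M'[of I] I by (intro product_integral_insert) auto
  also have "\<dots> = (\<integral>w. (\<integral>y. f (w(i := y)) \<partial>M i) \<partial>PiM (I - {i}) M)"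
    using PiM_M'[of "I - {i}"] assms(2) by (simp add: M'_def)
  finally show ?thesis .
qed

lemma measurable_bids:
  assumes "finite J" and "J \<subseteq> I" and "finite B"
    and "\<And>l. l \<in> J \<Longrightarrow> s l \<in> borel_measurable (M l)" and "\<And>l z. l \<in> J \<Longrightarrow> s l z \<in> B"
  shows "bids J s \<in> measurable (PiM I M) (count_space (PiE J (\<lambda>_. B)))"
proof -
  have "s l \<in> measurable (M l) (count_space B)" if "l \<in> J" for l
    unfolding measurable_count_space_eq2[OF assms(3)]
    using assms(4,5)[OF that] by (auto intro: measurable_sets)
  then have "bids J s \<in> measurable (PiM I M) (PiM J (\<lambda>_. count_space B))"
    unfolding bids_def using assms(2)
    by (intro measurable_restrict measurable_compose[OF measurable_component_singleton]) auto
  then show ?thesis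
    using assms(1,3) by (simp add: count_space_PiM_finite countable_finite)
qed

lemma finite_bidset: "finite (bidset K)"
proof -
  have "bidset K = (\<lambda>j. real j / real K) ` {..K}"
    unfolding bidset_def by auto
  then show ?thesis
    by simp
qed

lemma auction_format_allocation_bounds:
  assumes "auction_format n K x p" and "b \<in> PiE {..<n} (\<lambda>_. bidset K)" and "i < n"
  shows "0 \<le> x b i \<and> x b i \<le> 1"
proof -
  have nonneg: "\<forall>l<n. 0 \<le> x b l" and "(\<Sum>l<n. x b l) \<le> 1"
    using assms(1,2) unfolding auction_format_def by auto
  moreover have "x b i \<le> (\<Sum>l<n. x b l)"
    using assms(3) nonneg by (intro member_le_sum) auto
  ultimately show ?thesis
    using assms(3) by auto
qed

locale quantile_auction =
  fixes n K :: nat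
    and D :: "nat \<Rightarrow> real measure"
    and x :: "(nat \<Rightarrow> real) \<Rightarrow> nat \<Rightarrow> real"
    and \<pi> :: "nat \<Rightarrow> nat \<Rightarrow> real"
  assumes quantile_strategy: "\<And>i. i < n \<Longrightarrow> quantile_strategy (D i) K (\<pi> i)"
    and allocation_bounded: "\<And>b i. b \<in> PiE {..<n} (\<lambda>_. bidset K) \<Longrightarrow> i < n \<Longrightarrow> \<bar>x b i\<bar> \<le> 1"
begin

definition strategy :: "nat \<Rightarrow> real \<Rightarrow> real" where
  "strategy i = qstrat (cdf (D i)) K (\<pi> i)"

definition alloc :: "nat \<Rightarrow> (nat \<Rightarrow> real) \<Rightarrow> real \<Rightarrow> real" where
  "alloc i w b = x ((bids ({..<n} - {i}) strategy w)(i := b)) i"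

lemma prob_space_D: "l < n \<Longrightarrow> prob_space (D l)"
  using quantile_strategy
  by (simp add: quantile_strategy_def unit_interval_distribution_def real_distribution_def)

lemma strategy_in_bidset: "l < n \<Longrightarrow> strategy l z \<in> bidset K"
  unfolding strategy_def using quantile_strategy.qstrat_in_bidset[OF quantile_strategy] .

lemma strategy_measurable: "l < n \<Longrightarrow> strategy l \<in> borel_measurable (D l)"
proof -
  assume "l < n"
  then interpret quantile_strategy "D l" K "\<pi> l"
    by (rule quantile_strategy)
  have "strategy l \<in> borel_measurable borel"
    unfolding strategy_def qstrat_def by measurable
  then show ?thesis
    using measurable_cong_sets[OF events_eq_borel refl, of borel] by simp
qed

lemma alloc_bounded: "i < n \<Longrightarrow> b \<in> bidset K \<Longrightarrow> \<bar>alloc i w b\<bar> \<le> 1"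
  unfolding alloc_def
  by (intro allocation_bounded) (auto simp: bids_def PiE_def extensional_def strategy_in_bidset)

lemma alloc_measurable:
  assumes "i < n"
  shows "(\<lambda>w. alloc i w b) \<in> borel_measurable (PiM {..<n} D)"
proof -
  have "bids ({..<n} - {i}) strategy
      \<in> measurable (PiM {..<n} D) (count_space (PiE ({..<n} - {i}) (\<lambda>_. bidset K)))"
    by (intro measurable_bids finite_bidset strategy_measurable strategy_in_bidset) auto
  then show ?thesis
    unfolding alloc_def by (rule measurable_compose) simp
qed

lemma ptil_eq_sum_threshold_payments:
  assumes "i < n"
  shows "ptil n x strategy v i = (\<Sum>j=1..K. (alloc i v (real j / real K) - alloc i v ((real j - 1) / real K))
            * quantile_strategy.threshold_payment (D i) K (\<pi> i) j (v i))"
proof -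
  interpret quantile_strategy "D i" K "\<pi> i"
    using assms by (rule quantile_strategy)
  have "bids {..<n} strategy (v(i := z)) = (bids ({..<n} - {i}) strategy v)(i := strategy i z)" for z
    using assms by (auto simp: bids_def fun_eq_iff)
  then have xtil_upd: "xtil n x strategy (v(i := z)) i = alloc i v (qstrat (cdf (D i)) K (\<pi> i) z)" for z
    by (simp add: xtil_def alloc_def strategy_def)
  have "xtil n x strategy v i = alloc i v (qstrat (cdf (D i)) K (\<pi> i) (v i))"
    using xtil_upd[of "v i"] by simp
  then have "ptil n x strategy v i = alloc i v (qstrat (cdf (D i)) K (\<pi> i) (v i)) * v i
      - (LBINT z=0..v i. alloc i v (qstrat (cdf (D i)) K (\<pi> i) z))"
    by (simp only: ptil_def xtil_upd)
  also have "\<dots> = (\<Sum>j=1..K. (alloc i v (real j / real K) - alloc i v ((real j - 1) / real K))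
            * threshold_payment j (v i))"
    by (rule qstrat_payment)
  finally show ?thesis .
qed

lemma alloc_fun_upd_self: "alloc i (w(i := y)) b = alloc i w b"
proof -
  have "bids ({..<n} - {i}) strategy (w(i := y)) = bids ({..<n} - {i}) strategy w"
    by (auto simp: bids_def fun_eq_iff)
  then show ?thesis
    by (simp add: alloc_def)
qed

lemma integrable_ptil:
  assumes "i < n"
  shows "integrable (PiM {..<n} D) (\<lambda>v. ptil n x strategy v i)"
proof -
  interpret quantile_strategy "D i" K "\<pi> i"
    using assms by (rule quantile_strategy)
  interpret P: prob_space "PiM {..<n} D"
    by (intro prob_space_PiM prob_space_D) auto
  have "integrable (PiM {..<n} D)
      (\<lambda>v. (alloc i v (real j / real K) - alloc i v ((real j - 1) / real K)) * threshold_payment j (v i))"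
    if "j \<in> {1..K}" for j
  proof (rule P.integrable_const_bound)
    have "(real j - 1) / real K \<in> bidset K" "real j / real K \<in> bidset K"
      using that by (auto intro: of_nat_div_in_bidset of_nat_minus_one_div_in_bidset)
    then have "\<bar>alloc i v (real j / real K) - alloc i v ((real j - 1) / real K)\<bar> \<le> 2" for v
      using alloc_bounded[OF assms, of "real j / real K" v] alloc_bounded[OF assms, of "(real j - 1) / real K" v]
      by arith
    then have "\<bar>(alloc i v (real j / real K) - alloc i v ((real j - 1) / real K)) * threshold_payment j (v i)\<bar>
        \<le> 2 * (\<bar>threshold j\<bar> + \<bar>threshold (K + 1)\<bar>)" for v
      unfolding abs_mult by (intro mult_mono threshold_payment_bounded) auto
    then show "AE v in PiM {..<n} D.
        norm ((alloc i v (real j / real K) - alloc i v ((real j - 1) / real K)) * threshold_payment j (v i))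
        \<le> 2 * (\<bar>threshold j\<bar> + \<bar>threshold (K + 1)\<bar>)"
      by simp
    have "(\<lambda>v. threshold_payment j (v i)) \<in> borel_measurable (PiM {..<n} D)"
      using assms threshold_payment_measurable
      by (intro measurable_compose[OF measurable_component_singleton]) auto
    then show "(\<lambda>v. (alloc i v (real j / real K) - alloc i v ((real j - 1) / real K)) * threshold_payment j (v i))
        \<in> borel_measurable (PiM {..<n} D)"
      using alloc_measurable[OF assms] by measurable
  qed
  then show ?thesis
    unfolding ptil_eq_sum_threshold_payments[OF assms] by (rule Bochner_Integration.integrable_sum)
qed

lemma integral_ptil:
  assumes "i < n"
  shows "(\<integral>v. ptil n x strategy v i \<partial>PiM {..<n} D)
       = (\<integral>w. (\<Sum>j=1..K. \<Sum>k=j+1..K+1. \<pi> i k * (alloc i w (real j / real K) - alloc i w ((real j - 1) / real K))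
              * quantile (cdf (D i)) (cumul (\<pi> i) j)) \<partial>PiM ({..<n} - {i}) D)"
proof -
  interpret quantile_strategy "D i" K "\<pi> i"
    using assms by (rule quantile_strategy)
  have "(\<integral>v. ptil n x strategy v i \<partial>PiM {..<n} D)
      = (\<integral>w. (\<integral>y. ptil n x strategy (w(i := y)) i \<partial>D i) \<partial>PiM ({..<n} - {i}) D)"
    using assms integrable_ptil[OF assms]
    by (intro integral_PiM_remove_coordinate prob_space_D) auto
  also have "\<dots> = (\<integral>w. (\<Sum>j=1..K. \<Sum>k=j+1..K+1. \<pi> i k * (alloc i w (real j / real K) - alloc i w ((real j - 1) / real K))
              * quantile (cdf (D i)) (cumul (\<pi> i) j)) \<partial>PiM ({..<n} - {i}) D)"
  proof (rule Bochner_Integration.integral_cong[OF refl])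
    fix w
    let ?\<Delta> = "\<lambda>j. alloc i w (real j / real K) - alloc i w ((real j - 1) / real K)"
    have "(\<integral>y. ptil n x strategy (w(i := y)) i \<partial>D i) = (\<integral>y. (\<Sum>j=1..K. ?\<Delta> j * threshold_payment j y) \<partial>D i)"
      unfolding ptil_eq_sum_threshold_payments[OF assms] alloc_fun_upd_self by simp
    also have "\<dots> = (\<Sum>j=1..K. ?\<Delta> j * (threshold j * (\<Sum>k=j+1..K+1. \<pi> i k)))"
      by (simp add: Bochner_Integration.integral_sum integrable_threshold_payment integral_threshold_payment)
    also have "\<dots> = (\<Sum>j=1..K. \<Sum>k=j+1..K+1. \<pi> i k * ?\<Delta> j * quantile (cdf (D i)) (cumul (\<pi> i) j))"
      unfolding threshold_def
      by (intro sum.cong refl) (simp only: mult.assoc flip: sum_distrib_right, simp add: mult_ac)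
    finally show "(\<integral>y. ptil n x strategy (w(i := y)) i \<partial>D i)
        = (\<Sum>j=1..K. \<Sum>k=j+1..K+1. \<pi> i k * ?\<Delta> j * quantile (cdf (D i)) (cumul (\<pi> i) j))" .
  qed
  finally show ?thesis .
qed

end

theorem mainTheorem7:
  fixes n K :: nat
    and D :: "nat \<Rightarrow> real measure"
    and x p :: "(nat \<Rightarrow> real) \<Rightarrow> nat \<Rightarrow> real"
    and \<pi> :: "nat \<Rightarrow> nat \<Rightarrow> real"
  assumes K_pos: "0 < K"
    and D_prob: "\<And>i. i < n \<Longrightarrow> prob_space (D i)"
    and D_borel: "\<And>i. i < n \<Longrightarrow> sets (D i) = sets borel"
    and D_supp: "\<And>i. i < n \<Longrightarrow> measure (D i) {0..1} = 1"
    and D_cont: "\<And>i. i < n \<Longrightarrow> continuous_on UNIV (cdf_of (D i))"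
    and M: "auction_format n K x p"
    and pi: "\<And>i. i < n \<Longrightarrow> prob_simplex K (\<pi> i)"
  defines "s \<equiv> (\<lambda>i. qstrat (cdf_of (D i)) K (\<pi> i))"
  shows "(\<integral>v. (\<Sum>i<n. ptil n x s v i) \<partial>(PiM {..<n} D)) =
         (\<Sum>i<n. \<integral>w. (\<Sum>j=1..K. \<Sum>k=j+1..K+1.
              \<pi> i k * (x ((bids ({..<n} - {i}) s w)(i := real j / real K)) i
                       - x ((bids ({..<n} - {i}) s w)(i := (real j - 1) / real K)) i)
              * quantile (cdf_of (D i)) (cumul (\<pi> i) j))
            \<partial>(PiM ({..<n} - {i}) D))"
proof -
  interpret quantile_auction n K D x \<pi>
  proof (rule quantile_auction.intro)
    show "quantile_strategy (D i) K (\<pi> i)" if "i < n" for i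
      unfolding quantile_strategy_def quantile_strategy_axioms_def unit_interval_distribution_def
        unit_interval_distribution_axioms_def real_distribution_def real_distribution_axioms_def
      using that D_prob D_borel D_supp D_cont pi by (simp add: cdf_of_eq_cdf)
    show "\<bar>x b i\<bar> \<le> 1" if "b \<in> PiE {..<n} (\<lambda>_. bidset K)" and "i < n" for b i
      using auction_format_allocation_bounds[OF M that] by simp
  qed
  have s: "s = strategy"
    by (simp add: s_def fun_eq_iff strategy_def cdf_of_eq_cdf)
  have "(\<integral>v. (\<Sum>i<n. ptil n x s v i) \<partial>PiM {..<n} D) = (\<Sum>i<n. \<integral>v. ptil n x s v i \<partial>PiM {..<n} D)"
    unfolding s using integrable_ptil by (intro Bochner_Integration.integral_sum) auto
  also have "\<dots> = (\<Sum>i<n. \<integral>w. (\<Sum>j=1..K. \<Sum>k=j+1..K+1.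
              \<pi> i k * (alloc i w (real j / real K) - alloc i w ((real j - 1) / real K))
              * quantile (cdf (D i)) (cumul (\<pi> i) j)) \<partial>(PiM ({..<n} - {i}) D))"
    unfolding s by (intro sum.cong refl) (simp add: integral_ptil)
  finally show ?thesis
    unfolding s alloc_def cdf_of_eq_cdf .
qed

end
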